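(* For all fixed $x,y\ge 1$, the expected number of edges in the random task-dependency graph resulting from the $(x,y)$ edge-removal process on $n$ vertices is $\Theta(n)$ as $n\to\infty$.
   Context: A task-dependency graph is a finite directed acyclic graph (no loops, no multiple edges). A vertex is initial if it has in-degree $0$ and terminal if it has out-degree $0$ (an isolated vertex is both). The $(x,y)$ edge-removal process on $n$ vertices: start with the task-dependency graph on $\{1,\dots,n\}$ having all edges $(a,b)$ with $a<b$. Edges are removed uniformly at random, one at a time; a removal that would cause more than $x$ initial vertices or more than $y$ terminal vertices is cancelled. The process terminates when no further edge can be removed. *)

theory Defs
  imports "HOL-Probability.Probability" "HOL-Library.Landau_Symbols"
begin

definition full_graph :: "nat \<Rightarrow> (nat \<times> nat) set" where
  "full_graph n = {(a,b). 1 \<le> a \<and> a < b \<and> b \<le> n}"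

definition initial_vertices :: "nat \<Rightarrow> (nat \<times> nat) set \<Rightarrow> nat set" where
  "initial_vertices n E = {v \<in> {1..n}. \<forall>u. (u,v) \<notin> E}"

definition terminal_vertices :: "nat \<Rightarrow> (nat \<times> nat) set \<Rightarrow> nat set" where
  "terminal_vertices n E = {v \<in> {1..n}. \<forall>w. (v,w) \<notin> E}"

text \<open>Edges whose removal is not cancelled.\<close>
definition removable :: "nat \<Rightarrow> nat \<Rightarrow> nat \<Rightarrow> (nat \<times> nat) set \<Rightarrow> (nat \<times> nat) set" where
  "removable n x y E = {e \<in> E. card (initial_vertices n (E - {e})) \<le> x
                              \<and> card (terminal_vertices n (E - {e})) \<le> y}"

text \<open>Distribution of the final graph of the process started from edge set E.
  Cancelled removals do not change the state, so the next effective removal is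
  uniform among the removable edges.\<close>
function removal_process :: "nat \<Rightarrow> nat \<Rightarrow> nat \<Rightarrow> (nat \<times> nat) set \<Rightarrow> (nat \<times> nat) set pmf" where
  "removal_process n x y E =
     (if finite E \<and> removable n x y E \<noteq> {}
      then bind_pmf (pmf_of_set (removable n x y E)) (\<lambda>e. removal_process n x y (E - {e}))
      else return_pmf E)"
  by pat_completeness auto
termination
proof (relation "Wellfounded.measure (\<lambda>(n,x,y,E). card E)")
  fix n x y E e
  assume a: "finite E \<and> removable n x y E \<noteq> {}" and b: "e \<in> set_pmf (pmf_of_set (removable n x y E))"
  have "finite (removable n x y E)" using a unfolding removable_def by auto
  hence "e \<in> E" using a b by (auto simp: removable_def)
  thus "((n, x, y, E - {e}), n, x, y, E) \<in> Wellfounded.measure (\<lambda>(n, x, y, E). card E)"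
    using a by (metis (no_types, lifting) card_Diff1_less case_prod_conv in_measure)
qed auto

definition final_graph :: "nat \<Rightarrow> nat \<Rightarrow> nat \<Rightarrow> (nat \<times> nat) set pmf" where
  "final_graph n x y = removal_process n x y (full_graph n)"

end

theory Submission
  imports Defs
begin

text \<open>Removals that would create too many initial or terminal vertices are cancelled, and
  the complete graph has just one of each, so every graph reached has at most x initial
  vertices; a final graph therefore has at least n - x edges, one into each non-initial vertex.
  Conversely, in a final graph every edge is the only edge into its head or the only edge out
  of its tail: otherwise deleting it changes neither the initial nor the terminal vertices, so
  the removal would not be cancelled. Hence a final graph has at most 2n edges, and the
  expected number of edges lies between n - x and 2n.\<close>

lemma full_graph_subset: "full_graph n \<subseteq> {1..n} \<times> {1..n}"
  by (auto simp: full_graph_def)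

lemma finite_full_graph: "finite (full_graph n)"
  using full_graph_subset by (rule finite_subset) auto

lemma initial_vertices_full_graph: "initial_vertices n (full_graph n) \<subseteq> {1}"
  by (clarsimp simp: initial_vertices_def full_graph_def) (metis le_refl nat_less_le)

lemma terminal_vertices_full_graph: "terminal_vertices n (full_graph n) \<subseteq> {n}"
  by (auto simp: terminal_vertices_def full_graph_def)

lemma initial_vertices_Diff_edge:
  assumes "(a', b) \<in> E" "a' \<noteq> a"
  shows "initial_vertices n (E - {(a, b)}) = initial_vertices n E"
  using assms by (auto simp: initial_vertices_def)

lemma terminal_vertices_Diff_edge:
  assumes "(a, b') \<in> E" "b' \<noteq> b"
  shows "terminal_vertices n (E - {(a, b)}) = terminal_vertices n E"
  using assms by (auto simp: terminal_vertices_def)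

lemma card_le_card_plus_initial_vertices:
  assumes "finite E"
  shows "n \<le> card E + card (initial_vertices n E)"
proof -
  have "{1..n} \<subseteq> snd ` E \<union> initial_vertices n E"
    by (force simp: initial_vertices_def)
  then have "card {1..n} \<le> card (snd ` E \<union> initial_vertices n E)"
    using assms by (intro card_mono) (simp_all add: initial_vertices_def)
  also have "\<dots> \<le> card (snd ` E) + card (initial_vertices n E)"
    by (rule card_Un_le)
  also have "\<dots> \<le> card E + card (initial_vertices n E)"
    using assms by (simp add: card_image_le)
  finally show ?thesis by simp
qed

lemma card_edges_le_if_unique_at_an_end:
  assumes "E \<subseteq> V \<times> V" "finite V"
    and unique: "\<And>e. e \<in> E \<Longrightarrow>
      (\<forall>e'\<in>E. snd e' = snd e \<longrightarrow> e' = e) \<or> (\<forall>e'\<in>E. fst e' = fst e \<longrightarrow> e' = e)"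
  shows "card E \<le> 2 * card V"
proof -
  define A where "A = {e\<in>E. \<forall>e'\<in>E. snd e' = snd e \<longrightarrow> e' = e}"
  define B where "B = {e\<in>E. \<forall>e'\<in>E. fst e' = fst e \<longrightarrow> e' = e}"
  have "A \<subseteq> V \<times> V" "B \<subseteq> V \<times> V"
    using assms(1) by (auto simp: A_def B_def)
  have "card A \<le> card V"
  proof (rule card_inj_on_le)
    show "inj_on snd A" by (auto simp: A_def inj_on_def)
    show "snd ` A \<subseteq> V" using \<open>A \<subseteq> V \<times> V\<close> by fastforce
  qed fact
  moreover have "card B \<le> card V"
  proof (rule card_inj_on_le)
    show "inj_on fst B" by (auto simp: B_def inj_on_def)
    show "fst ` B \<subseteq> V" using \<open>B \<subseteq> V \<times> V\<close> by fastforce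
  qed fact
  moreover have "E = A \<union> B"
    using unique by (auto simp: A_def B_def)
  ultimately show ?thesis
    using card_Un_le[of A B] by simp
qed

lemma set_pmf_removal_process_invariant:
  assumes "finite E" "P E"
    and step: "\<And>E e. finite E \<Longrightarrow> P E \<Longrightarrow> e \<in> removable n x y E \<Longrightarrow> P (E - {e})"
    and "F \<in> set_pmf (removal_process n x y E)"
  shows "P F \<and> removable n x y F = {}"
  using assms
proof (induction n x y E rule: removal_process.induct)
  case (1 n x y E)
  have fin_removable: "finite (removable n x y E)"
    using "1.prems"(1) by (simp add: removable_def)
  show ?case
  proof (cases "removable n x y E = {}")
    case True
    then have "removal_process n x y E = return_pmf E"
      by (subst removal_process.simps) simp
    with True "1.prems" show ?thesis by simp
  next
    case False
    then have "removal_process n x y E =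
        bind_pmf (pmf_of_set (removable n x y E)) (\<lambda>e. removal_process n x y (E - {e}))"
      using "1.prems"(1) by (subst removal_process.simps) simp
    with "1.prems"(4) obtain e where e: "e \<in> set_pmf (pmf_of_set (removable n x y E))"
      and F: "F \<in> set_pmf (removal_process n x y (E - {e}))"
      by auto
    have "e \<in> removable n x y E"
      using e fin_removable False by simp
    then show ?thesis
      using "1.IH"[OF _ e] "1.prems" F False by blast
  qed
qed

definition admissible :: "nat \<Rightarrow> nat \<Rightarrow> nat \<Rightarrow> (nat \<times> nat) set \<Rightarrow> bool" where
  "admissible n x y E \<longleftrightarrow> E \<subseteq> full_graph n \<and> card (initial_vertices n E) \<le> x
     \<and> card (terminal_vertices n E) \<le> y"

lemma admissible_full_graph:
  assumes "x \<ge> 1" "y \<ge> 1"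
  shows "admissible n x y (full_graph n)"
proof -
  have "card (initial_vertices n (full_graph n)) \<le> 1"
    using card_mono[OF _ initial_vertices_full_graph] by simp
  moreover have "card (terminal_vertices n (full_graph n)) \<le> 1"
    using card_mono[OF _ terminal_vertices_full_graph] by simp
  ultimately show ?thesis
    using assms by (simp add: admissible_def)
qed

lemma set_pmf_final_graph_admissible:
  assumes "x \<ge> 1" "y \<ge> 1" "F \<in> set_pmf (final_graph n x y)"
  shows "admissible n x y F \<and> removable n x y F = {}"
proof -
  have "admissible n x y (E - {e})" if "admissible n x y E" "e \<in> removable n x y E" for E e
    using that by (auto simp: admissible_def removable_def)
  then show ?thesis
    using set_pmf_removal_process_invariant[where P = "admissible n x y"] finite_full_graph
      admissible_full_graph[OF assms(1,2)] assms(3)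
    unfolding final_graph_def by blast
qed

lemma card_ge_if_admissible:
  assumes "admissible n x y F"
  shows "n \<le> card F + x"
proof -
  have "finite F"
    using assms finite_full_graph by (auto simp: admissible_def intro: finite_subset)
  then show ?thesis
    using card_le_card_plus_initial_vertices[of F n] assms by (simp add: admissible_def)
qed

lemma card_le_if_admissible_and_final:
  assumes "admissible n x y F" "removable n x y F = {}"
  shows "card F \<le> 2 * n"
proof -
  have "F \<subseteq> {1..n} \<times> {1..n}"
    using assms(1) full_graph_subset by (auto simp: admissible_def)
  moreover have "(\<forall>e'\<in>F. snd e' = snd e \<longrightarrow> e' = e) \<or> (\<forall>e'\<in>F. fst e' = fst e \<longrightarrow> e' = e)"
    if "e \<in> F" for e
  proof (rule ccontr)
    assume "\<not> ?thesis"
    moreover obtain a b where e: "e = (a, b)" by fastforce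
    ultimately obtain e1 e2 where "e1 \<in> F" "snd e1 = b" "e1 \<noteq> e" "e2 \<in> F" "fst e2 = a" "e2 \<noteq> e"
      by auto
    then have "(fst e1, b) \<in> F" "fst e1 \<noteq> a" "(a, snd e2) \<in> F" "snd e2 \<noteq> b"
      using e by (metis prod.collapse)+
    then have "e \<in> removable n x y F"
      using \<open>e \<in> F\<close> assms(1) e
      by (simp add: removable_def admissible_def initial_vertices_Diff_edge terminal_vertices_Diff_edge)
    with assms(2) show False by simp
  qed
  ultimately show ?thesis
    using card_edges_le_if_unique_at_an_end[of F "{1..n}"] by simp
qed

lemma expectation_pmf_bounds:
  fixes f :: "'a \<Rightarrow> real"
  assumes "\<And>a. a \<in> set_pmf p \<Longrightarrow> l \<le> f a \<and> f a \<le> u"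
  shows "l \<le> measure_pmf.expectation p f \<and> measure_pmf.expectation p f \<le> u"
proof -
  have "integrable (measure_pmf p) f"
    by (rule measure_pmf.integrable_const_bound[where B = "\<bar>l\<bar> + \<bar>u\<bar>"])
      (use assms in \<open>fastforce simp: AE_measure_pmf_iff\<close>)+
  then show ?thesis
    using assms by (intro conjI measure_pmf.integral_ge_const measure_pmf.integral_le_const)
      (auto simp: AE_measure_pmf_iff)
qed

lemma bigtheta_real_of_linear_bounds:
  fixes f :: "nat \<Rightarrow> real"
  assumes "\<And>n. real n - c \<le> f n" "\<And>n. f n \<le> C * real n"
  shows "f \<in> \<Theta>(\<lambda>n. real n)"
proof (rule bigthetaI'[of "1/2" "max C 1"])
  show "\<forall>\<^sub>F n in at_top. 1/2 * norm (real n) \<le> norm (f n) \<and> norm (f n) \<le> max C 1 * norm (real n)"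
    using eventually_ge_at_top[of "nat \<lceil>2 * c\<rceil>"]
  proof eventually_elim
    case (elim n)
    then have "real n / 2 \<le> f n"
      using assms(1)[of n] by linarith
    moreover have "f n \<le> max C 1 * real n"
      using assms(2)[of n] mult_right_mono[of C "max C 1" "real n"] by simp
    ultimately show ?case
      by simp
  qed
qed auto

theorem mainTheorem8:
  fixes x y :: nat
  assumes "x \<ge> 1" and "y \<ge> 1"
  shows "(\<lambda>n. measure_pmf.expectation (final_graph n x y) (\<lambda>E. real (card E)))
           \<in> \<Theta>(\<lambda>n. real n)"
proof -
  have "real n - real x \<le> real (card F) \<and> real (card F) \<le> 2 * real n"
    if "F \<in> set_pmf (final_graph n x y)" for n F
    using set_pmf_final_graph_admissible[OF assms that]
      card_ge_if_admissible card_le_if_admissible_and_final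
    by (metis of_nat_add of_nat_le_iff of_nat_mult of_nat_numeral diff_le_eq)
  then have "real n - real x \<le> measure_pmf.expectation (final_graph n x y) (\<lambda>E. real (card E))
      \<and> measure_pmf.expectation (final_graph n x y) (\<lambda>E. real (card E)) \<le> 2 * real n" for n
    by (rule expectation_pmf_bounds)
  then show ?thesis
    by (intro bigtheta_real_of_linear_bounds) auto
qed

end
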